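(* Let $U$ be the open unit disc in $\mathbb{R}^2$, let $E\subset U$ be open with $M:=\partial E\cap U$ a $C^{1,1}$ curve in $U$, and assume $E\setminus\{0\}=E^{sc}$. Suppose there is $x\in M\setminus\{0\}$ with $x\in H:=\{(x_1,x_2)\in U: x_2>0\}$ and $\sin\sigma(x)=-1$. Then $E$ is not convex.
   Context: For measurable $E\subset U$ and $\tau\in(0,1)$, $L_E(\tau)=\mathscr{H}^1(E\cap\mathbb{S}^1_\tau)$ with $\mathbb{S}^1_\tau$ the centred circle of radius $\tau$; $p(E)=\{\tau: L_E(\tau)>0\}$; $E^{sc}=\bigcup_{\tau\in p(E)}C(\tau,\alpha_\tau)$ where $C(\tau,\alpha)=\{y\in\mathbb{S}^1_\tau:\langle y,e_1\rangle>\tau\cos\alpha\}$ for $\alpha<\pi$, $C(\tau,\pi)=\mathbb{S}^1_\tau$, and $2\alpha_\tau\tau=L_E(\tau)$. For $p\in M$, $n(p)$ is the inner unit normal to $E$ and $t(p)$ is the unit tangent chosen so that $\{t(p),n(p)\}$ is a positively oriented basis of $\mathbb{R}^2$; for $p\neq0$, $\sigma(p)$ is the angle measured anticlockwise from the position vector $p$ to $t(p)$ (defined modulo $2\pi$). *)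

theory Defs
  imports "HOL-Analysis.Analysis"
begin

text \<open>The plane R^2 is modelled by the complex numbers (e1 = 1, <y,e1> = Re y).\<close>

definition U :: "complex set" where
  "U = ball 0 1"

text \<open>L_E(tau) = H^1(E \<inter> S^1_tau).  The circle of radius tau is parametrised by arc length
  theta \<mapsto> tau * cis theta (theta in [0,2pi)), whose 1-dim. Hausdorff measure is tau times the
  Lebesgue measure of the parameter set.\<close>
definition L_E :: "complex set \<Rightarrow> real \<Rightarrow> real" where
  "L_E E \<tau> = \<tau> * measure lebesgue {\<theta> \<in> {0..<2*pi}. complex_of_real \<tau> * cis \<theta> \<in> E}"

definition pE :: "complex set \<Rightarrow> real set" where
  "pE E = {\<tau> \<in> {0<..<1}. L_E E \<tau> > 0}"

definition cap :: "real \<Rightarrow> real \<Rightarrow> complex set" where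
  "cap \<tau> \<alpha> = (if \<alpha> < pi then {y \<in> sphere 0 \<tau>. Re y > \<tau> * cos \<alpha>} else sphere 0 \<tau>)"

definition alpha_E :: "complex set \<Rightarrow> real \<Rightarrow> real" where
  "alpha_E E \<tau> = L_E E \<tau> / (2 * \<tau>)"

definition Esc :: "complex set \<Rightarrow> complex set" where
  "Esc E = (\<Union>\<tau> \<in> pE E. cap \<tau> (alpha_E E \<tau>))"

text \<open>Local C^{1,1} chart of E at a boundary point p with inner unit normal nu:
  near p, in the orthonormal frame (w, nu) with w = -i*nu (so that {w, nu} is positively
  oriented), E is the strict epigraph of a C^{1,1} function f with f 0 = 0, f' 0 = 0.\<close>
definition C11_chart :: "complex set \<Rightarrow> complex \<Rightarrow> complex \<Rightarrow> bool" where
  "C11_chart E p \<nu> \<longleftrightarrow> norm \<nu> = 1 \<and>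
     (\<exists>r>0. \<exists>f f' :: real \<Rightarrow> real. \<exists>K.
        ball p r \<subseteq> U \<and>
        (\<forall>s. (f has_real_derivative f' s) (at s)) \<and>
        (\<forall>s1 s2. \<bar>f' s1 - f' s2\<bar> \<le> K * \<bar>s1 - s2\<bar>) \<and>
        f 0 = 0 \<and> f' 0 = 0 \<and>
        E \<inter> ball p r = {y \<in> ball p r. \<exists>s h. y = p + of_real s * (- \<i> * \<nu>) + of_real h * \<nu> \<and> h > f s})"

definition C11_boundary :: "complex set \<Rightarrow> bool" where
  "C11_boundary E \<longleftrightarrow> (\<forall>p \<in> frontier E \<inter> U. \<exists>\<nu>. C11_chart E p \<nu>)"

definition inner_normal :: "complex set \<Rightarrow> complex \<Rightarrow> complex" where
  "inner_normal E p = (SOME \<nu>. C11_chart E p \<nu>)"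

text \<open>Unit tangent t with {t, n} positively oriented, i.e. n = i * t.\<close>
definition tangent :: "complex set \<Rightarrow> complex \<Rightarrow> complex" where
  "tangent E p = - \<i> * inner_normal E p"

text \<open>Angle measured anticlockwise from p to t(p) (a representative mod 2pi).\<close>
definition sigma :: "complex set \<Rightarrow> complex \<Rightarrow> real" where
  "sigma E p = Arg (tangent E p / p)"

end

theory Submission
  imports Defs
begin

text \<open>If \<open>sin \<sigma>(x) = -1\<close>, the inner normal at \<open>x\<close> is the outward radial direction
  \<open>x/|x|\<close>, so the points \<open>(|x| + h) x/|x|\<close> lie in \<open>E\<close> for small \<open>h > 0\<close>. Since \<open>E\<close> is a union
  of circular caps centred on the positive real axis, the real point \<open>|x| + h\<close> lies in \<open>E\<close> too.
  As \<open>Im x > 0\<close>, we have \<open>Re x < |x|\<close>, so for small \<open>h\<close> the segment from \<open>x\<close> to \<open>|x| + h\<close> leaves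
  \<open>x\<close> into the open half-plane beyond the tangent line of \<open>M\<close>, hence outside \<open>E\<close> near \<open>x\<close>.
  Convexity would force this segment into \<open>E\<close>.\<close>

lemma of_real_in_cap:
  assumes "y \<in> cap \<tau> \<alpha>"
  shows "complex_of_real \<tau> \<in> cap \<tau> \<alpha>"
proof -
  have norm_y: "cmod y = \<tau>" using assms by (auto simp: cap_def split: if_splits)
  show ?thesis
  proof (cases "\<alpha> < pi")
    case True
    then have "\<tau> * cos \<alpha> < Re y" using assms by (simp add: cap_def)
    also have "Re y \<le> \<tau>" using complex_Re_le_cmod norm_y by metis
    finally show ?thesis using True norm_y by (auto simp: cap_def)
  qed (use norm_y in \<open>auto simp: cap_def\<close>)
qed

lemma of_real_norm_in_Esc:
  assumes "y \<in> Esc E"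
  shows "complex_of_real (cmod y) \<in> Esc E"
proof -
  obtain \<tau> where "\<tau> \<in> pE E" and y: "y \<in> cap \<tau> (alpha_E E \<tau>)"
    using assms unfolding Esc_def by blast
  moreover have "cmod y = \<tau>" using y by (auto simp: cap_def split: if_splits)
  ultimately show ?thesis using of_real_in_cap unfolding Esc_def by fastforce
qed

lemma sin_Arg_eq_minus_one:
  assumes "sin (Arg z) = -1"
  shows "z = - \<i> * complex_of_real (cmod z)"
proof -
  have "z \<noteq> 0" using assms by (auto simp: Arg_zero)
  then have Im_z: "Im z = - cmod z" using assms sin_Arg[of z] by (simp add: field_simps)
  have "(Re z)\<^sup>2 + (Im z)\<^sup>2 = (cmod z)\<^sup>2" by (simp add: cmod_power2)
  then have "Re z = 0" using Im_z by simp
  with Im_z show ?thesis by (simp add: complex_eq_iff)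
qed

lemma inner_normal_eq_sgn:
  assumes "C11_chart E x (inner_normal E x)" and "sin (sigma E x) = -1"
  shows "inner_normal E x = sgn x"
proof -
  let ?\<nu> = "inner_normal E x"
  have "norm ?\<nu> = 1" using assms(1) by (simp add: C11_chart_def)
  moreover have "- \<i> * ?\<nu> / x = - \<i> * complex_of_real (cmod (- \<i> * ?\<nu> / x))"
    using sin_Arg_eq_minus_one[OF assms(2)[unfolded sigma_def tangent_def]] .
  moreover have "x \<noteq> 0" using assms(2) by (auto simp: sigma_def Arg_zero)
  ultimately show ?thesis by (simp add: sgn_eq norm_divide norm_mult field_simps)
qed

lemma Re_divide_unit:
  assumes "norm \<nu> = 1"
  shows "Re (v / \<nu>) = v \<bullet> \<nu>"
proof -
  have "(Re \<nu>)\<^sup>2 + (Im \<nu>)\<^sup>2 = 1" using assms cmod_power2[of \<nu>] by simp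
  then show ?thesis by (simp add: Re_divide inner_complex_def)
qed

lemma chart_frame_coordinates:
  assumes "\<nu> \<noteq> 0"
    and "p + complex_of_real s * (- \<i> * \<nu>) + complex_of_real h * \<nu> = p + complex_of_real t * v"
  shows "h = t * Re (v / \<nu>)" and "s = - t * Im (v / \<nu>)"
proof -
  have "(complex_of_real h - \<i> * complex_of_real s) * \<nu> = complex_of_real t * v"
    using assms(2) by (simp add: algebra_simps)
  then have "complex_of_real h - \<i> * complex_of_real s = complex_of_real t * (v / \<nu>)"
    using assms(1) by (simp add: field_simps)
  then show "h = t * Re (v / \<nu>)" and "s = - t * Im (v / \<nu>)"
    by (simp_all add: complex_eq_iff del: times_divide_eq_right)
qed

lemma eventually_near_ray:
  fixes p v :: "'a::real_normed_vector"
  assumes "r > 0"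
  shows "\<forall>\<^sub>F t in at_right 0. p + t *\<^sub>R v \<in> ball p r"
proof -
  have "((\<lambda>t. p + t *\<^sub>R v) \<longlongrightarrow> p + 0 *\<^sub>R v) (at_right 0)"
    by (intro tendsto_intros tendsto_ident_at)
  then show ?thesis using assms by (auto dest!: tendstoD simp: dist_commute)
qed

lemma C11_chart_normal_ray_in:
  assumes "C11_chart E p \<nu>"
  shows "\<forall>\<^sub>F h in at_right 0. p + h *\<^sub>R \<nu> \<in> E"
proof -
  obtain r f where "r > 0" and "f 0 = 0"
    and chart: "E \<inter> ball p r = {y \<in> ball p r. \<exists>s h. y = p + of_real s * (- \<i> * \<nu>) + of_real h * \<nu> \<and> h > f s}"
    using assms unfolding C11_chart_def by blast
  have ray_in: "p + h *\<^sub>R \<nu> \<in> E" if "h > 0" and "p + h *\<^sub>R \<nu> \<in> ball p r" for h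
  proof -
    have "p + h *\<^sub>R \<nu> = p + of_real 0 * (- \<i> * \<nu>) + of_real h * \<nu> \<and> h > f 0"
      using that \<open>f 0 = 0\<close> by (simp add: scaleR_conv_of_real)
    with that(2) show ?thesis using chart by blast
  qed
  show ?thesis
    using eventually_near_ray[OF \<open>r > 0\<close>] eventually_at_right_less[of "0::real"]
    by eventually_elim (use ray_in in blast)
qed

lemma C11_chart_outward_ray_notin:
  assumes "C11_chart E p \<nu>" and "v \<bullet> \<nu> < 0"
  shows "\<forall>\<^sub>F t in at_right 0. p + t *\<^sub>R v \<notin> E"
proof -
  obtain r f f' where "r > 0" and f0: "f 0 = 0" and f'0: "f' 0 = 0"
    and f': "\<forall>s. (f has_real_derivative f' s) (at s)"
    and chart: "E \<inter> ball p r = {y \<in> ball p r. \<exists>s h. y = p + of_real s * (- \<i> * \<nu>) + of_real h * \<nu> \<and> h > f s}"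
    using assms(1) unfolding C11_chart_def by blast
  have "norm \<nu> = 1" using assms(1) by (simp add: C11_chart_def)
  then have "\<nu> \<noteq> 0" by auto
  define a b where "a = Re (v / \<nu>)" and "b = Im (v / \<nu>)"
  have "a < 0" using assms(2) \<open>norm \<nu> = 1\<close> by (simp add: a_def Re_divide_unit)
  define g where "g t = f (- t * b)" for t
  have "(g has_real_derivative f' (- 0 * b) * (- b)) (at 0)"
    unfolding g_def by (rule DERIV_chain2[OF f'[rule_format]]) (auto intro!: derivative_eq_intros)
  then have "((\<lambda>t. g t / t) \<longlongrightarrow> 0) (at 0)"
    using f'0 f0 by (simp add: has_field_derivative_iff g_def)
  then have "((\<lambda>t. g t / t) \<longlongrightarrow> 0) (at_right 0)"
    by (rule filterlim_mono) (simp_all add: at_within_le_at)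
  then have "\<forall>\<^sub>F t in at_right 0. a < g t / t"
    using \<open>a < 0\<close> by (rule order_tendstoD)
  then show ?thesis
    using eventually_near_ray[OF \<open>r > 0\<close>, of p v] eventually_at_right_less[of "0::real"]
  proof eventually_elim
    case (elim t)
    show ?case
    proof
      assume "p + t *\<^sub>R v \<in> E"
      with elim(2) have "p + of_real t * v \<in> E \<inter> ball p r" by (simp add: scaleR_conv_of_real)
      then obtain s h where "p + of_real s * (- \<i> * \<nu>) + of_real h * \<nu> = p + of_real t * v"
        and "h > f s"
        unfolding chart by auto
      with chart_frame_coordinates[OF \<open>\<nu> \<noteq> 0\<close> this(1)] have "t * a > g t"
        by (simp add: a_def b_def g_def)
      with elim show False by (simp add: field_simps)
    qed
  qed
qed

lemma convex_eventually_segment_in: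
  fixes S :: "'a::euclidean_space set"
  assumes "convex S" and "open S" and "x \<in> closure S" and "p \<in> S"
  shows "\<forall>\<^sub>F t in at_right 0. x + t *\<^sub>R (p - x) \<in> S"
  using eventually_at_right_real[OF zero_less_one]
proof eventually_elim
  case (elim t)
  show ?case
  proof (cases "x = p")
    case False
    then have "x + t *\<^sub>R (p - x) \<in> open_segment x p"
      using elim by (auto simp: in_segment algebra_simps intro!: exI[of _ t])
    also have "\<dots> \<subseteq> interior S"
      using in_interior_closure_convex_segment[of S p x] assms
      by (simp add: interior_open open_segment_commute)
    finally show ?thesis using \<open>open S\<close> by (simp add: interior_open)
  qed (use \<open>p \<in> S\<close> in simp)
qed

lemma Re_less_cmod:
  assumes "Im z \<noteq> 0"
  shows "Re z < cmod z"
proof -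
  have "(Re z)\<^sup>2 < (cmod z)\<^sup>2" using assms by (simp add: cmod_power2)
  then show ?thesis by (rule power2_less_imp_less) simp
qed

lemma norm_add_scaleR_sgn:
  fixes x :: "'a::real_normed_vector"
  assumes "x \<noteq> 0" and "h \<ge> 0"
  shows "norm (x + h *\<^sub>R sgn x) = norm x + h"
proof -
  have "x + h *\<^sub>R sgn x = (1 + h / norm x) *\<^sub>R x"
    using assms by (simp add: sgn_div_norm divide_inverse algebra_simps)
  then show ?thesis using assms by (simp add: field_simps)
qed

lemma inner_of_real_minus_sgn:
  assumes "x \<noteq> 0"
  shows "(complex_of_real q - x) \<bullet> sgn x = (q * Re x - (cmod x)\<^sup>2) / cmod x"
  using assms
  by (simp add: complex_sgn_def inner_diff_left power2_norm_eq_inner inner_complex_def field_simps)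

lemma Esc_outward_real_point:
  assumes "E - {0} = Esc E" and "C11_chart E x (sgn x)" and "Im x \<noteq> 0"
  obtains q where "complex_of_real q \<in> E" and "(complex_of_real q - x) \<bullet> sgn x < 0"
proof -
  define a where "a = cmod x"
  have "x \<noteq> 0" using assms(3) by auto
  have "a * Re x < a\<^sup>2"
    using Re_less_cmod[OF assms(3)] \<open>x \<noteq> 0\<close> by (simp add: a_def power2_eq_square)
  moreover have "((\<lambda>h. (a + h) * Re x) \<longlongrightarrow> (a + 0) * Re x) (at_right 0)"
    by (intro tendsto_intros)
  ultimately have "\<forall>\<^sub>F h in at_right 0. (a + h) * Re x < a\<^sup>2"
    by (simp add: order_tendstoD)
  then obtain h where "h > 0" and ray_in: "x + h *\<^sub>R sgn x \<in> E" and "(a + h) * Re x < a\<^sup>2"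
    using C11_chart_normal_ray_in[OF assms(2)] eventually_at_right_less[of "0::real"]
    by (metis (mono_tags, lifting) eventually_happens' eventually_conj trivial_limit_at_right_real)
  have norm_ray: "cmod (x + h *\<^sub>R sgn x) = a + h"
    unfolding a_def using \<open>h > 0\<close> by (intro norm_add_scaleR_sgn \<open>x \<noteq> 0\<close>) simp
  moreover have "a + h > 0" using \<open>h > 0\<close> by (simp add: a_def add_nonneg_pos)
  ultimately have "x + h *\<^sub>R sgn x \<in> E - {0}" using ray_in by force
  then have "x + h *\<^sub>R sgn x \<in> Esc E" using assms(1) by simp
  then have "complex_of_real (a + h) \<in> Esc E" by (metis of_real_norm_in_Esc norm_ray)
  then have "complex_of_real (a + h) \<in> E" using assms(1) by blast
  moreover have "(complex_of_real (a + h) - x) \<bullet> sgn x < 0"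
    unfolding inner_of_real_minus_sgn[OF \<open>x \<noteq> 0\<close>]
    using \<open>(a + h) * Re x < a\<^sup>2\<close> \<open>x \<noteq> 0\<close> by (simp add: a_def divide_neg_pos)
  ultimately show ?thesis by (rule that)
qed

theorem mainTheorem6:
  fixes E :: "complex set" and x :: complex
  assumes "open E" and "E \<subseteq> U"
    and "C11_boundary E"
    and "E - {0} = Esc E"
    and "x \<in> frontier E \<inter> U" and "x \<noteq> 0"
    and "Im x > 0"
    and "sin (sigma E x) = -1"
  shows "\<not> convex E"
proof
  assume "convex E"
  obtain \<nu> where "C11_chart E x \<nu>" using assms(3,5) unfolding C11_boundary_def by blast
  then have "C11_chart E x (inner_normal E x)" unfolding inner_normal_def by (rule someI)
  then have chart: "C11_chart E x (sgn x)" using inner_normal_eq_sgn[OF _ assms(8)] by simp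
  obtain q where q_in: "complex_of_real q \<in> E" and outward: "(complex_of_real q - x) \<bullet> sgn x < 0"
    using Esc_outward_real_point[OF assms(4) chart] assms(7) by auto
  have "\<forall>\<^sub>F t in at_right 0. x + t *\<^sub>R (complex_of_real q - x) \<notin> E"
    using C11_chart_outward_ray_notin[OF chart outward] .
  moreover have "\<forall>\<^sub>F t in at_right 0. x + t *\<^sub>R (complex_of_real q - x) \<in> E"
    using assms(5) by (intro convex_eventually_segment_in \<open>convex E\<close> assms(1) q_in)
      (simp add: frontier_def)
  ultimately have "\<forall>\<^sub>F t in at_right (0::real). False"
    by eventually_elim blast
  then show False by (simp add: eventually_False)
qed

end
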